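(* Let $G=([N],\mathcal{E})$ be an undirected graph with Laplacian eigenvalues $0=\lambda_1\le\dots\le\lambda_N$, $\sigma\in(0,1)^N$, $c>0$, $q\in(0,1)$; let $d_i=\frac{\sigma_i}{|N(i)|+1}$, $m=\min_id_i$, $M=\max_id_i$, and assume $\lambda_2>0$ and $\lambda_NM^2<2m$. Let $\gamma_i=\frac{|N(i)|+1}{\sigma_i}$ and $\tilde d=\frac{\sum_i(|N(i)|+1)^2}{(\sum_i\gamma_i)^2}$. Then for every initial state $\theta(0)\in\mathbb{R}^N$ and every $b\in(0,1)$, with probability at least $1-b$ the limits $\lim_{t\to\infty}\theta_i(t)$ exist and equal a common value $\theta^*$ with $$\Big|\theta^*-\frac{\sum_i\gamma_i\theta_i(0)}{\sum_i\gamma_i}\Big|\le\frac{\sqrt{2\tilde d}\,c}{\sqrt{b(1-q^2)}}.$$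
   Context: $N(i)=\{j:(i,j)\in\mathcal{E}\}$; Laplacian $L$ has $L_{ii}=|N(i)|$, $L_{ij}=-1$ if $(i,j)\in\mathcal{E}$, $0$ otherwise. Distributed mechanism with parameters $\sigma\in(0,1)^N$, $c>0$, $q\in(0,1)$: at each round $t=0,1,2,\dots$, client $i$ sends $x_i(t)=\theta_i(t)+\eta_i(t)$ to each neighbor, where the $\eta_i(t)$ are mutually independent, Laplace distributed with density $\frac{1}{2cq^t}e^{-|x|/(cq^t)}$ (mean $0$, variance $2c^2q^{2t}$); client $i$ sets $y_i(t)=\frac{1}{|N(i)|+1}\sum_{j\in N(i)\cup\{i\}}x_j(t)$ and then $\theta_i(t+1)=(1-\sigma_i)\theta_i(t)+\sigma_iy_i(t)$. *)

theory Defs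
  imports "HOL-Probability.Probability" "Jordan_Normal_Form.Char_Poly"
begin

definition nbr :: "(nat \<times> nat) set \<Rightarrow> nat \<Rightarrow> nat set" where
  "nbr E i = {j. (i, j) \<in> E}"

definition undirected_graph :: "nat \<Rightarrow> (nat \<times> nat) set \<Rightarrow> bool" where
  "undirected_graph N E \<longleftrightarrow> E \<subseteq> {0..<N} \<times> {0..<N} \<and>
     (\<forall>i j. (i, j) \<in> E \<longrightarrow> (j, i) \<in> E) \<and> (\<forall>i. (i, i) \<notin> E)"

definition laplacian :: "nat \<Rightarrow> (nat \<times> nat) set \<Rightarrow> real mat" where
  "laplacian N E = mat N N (\<lambda>(i, j). if i = j then real (card (nbr E i))
                                      else if (i, j) \<in> E then -1 else 0)"

text \<open>lams is the list of Laplacian eigenvalues (with multiplicity) in nondecreasing order: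
  lams ! 0 = lambda_1, ..., lams ! (N-1) = lambda_N.\<close>
definition laplacian_eigenvalues :: "nat \<Rightarrow> (nat \<times> nat) set \<Rightarrow> real list \<Rightarrow> bool" where
  "laplacian_eigenvalues N E lams \<longleftrightarrow> length lams = N \<and> sorted lams \<and>
     char_poly (laplacian N E) = prod_list (map (\<lambda>a. [:- a, 1:]) lams)"

text \<open>State of the mechanism: theta_state N E sigma th0 eta t i = theta_i(t), given the
  realised noise eta j t = eta_j(t).\<close>
primrec theta_state :: "nat \<Rightarrow> (nat \<times> nat) set \<Rightarrow> (nat \<Rightarrow> real) \<Rightarrow> (nat \<Rightarrow> real) \<Rightarrow>
    (nat \<Rightarrow> nat \<Rightarrow> real) \<Rightarrow> nat \<Rightarrow> nat \<Rightarrow> real" where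
  "theta_state N E \<sigma> th0 \<eta> 0 = th0"
| "theta_state N E \<sigma> th0 \<eta> (Suc t) =
     (\<lambda>i. (1 - \<sigma> i) * theta_state N E \<sigma> th0 \<eta> t i
          + \<sigma> i * ((\<Sum>j\<in>insert i (nbr E i). theta_state N E \<sigma> th0 \<eta> t j + \<eta> j t)
                     / (real (card (nbr E i)) + 1)))"

end

theory Submission
  imports Defs "Jordan_Normal_Form.Jordan_Normal_Form_Uniqueness" "Jordan_Normal_Form.Jordan_Normal_Form_Existence"
begin

(* Write gamma_i = (|N(i)|+1)/sigma_i and w_i = |N(i)|+1.  The noiseless update T
   preserves the weighted sum  sum_i gamma_i x_i, while the injected noise adds exactly
   xi(t) = sum_j w_j eta_j(t) to it; hence the weighted mean of theta(t) equals
   (sum_i gamma_i theta_i(0) + sum_{s<t} xi(s)) / Gamma,  Gamma = sum_i gamma_i.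
   On a connected graph T strictly contracts the gamma-weighted variance around that mean
   (a discrete Poincare inequality for the Dirichlet energy), so whenever the noise is
   absolutely summable the variance tends to 0 and every theta_i(t) converges to
   (sum_i gamma_i theta_i(0) + sum_t xi(t)) / Gamma.  This argument works for every
   sigma in (0,1)^N. *)

no_notation Finite_Cartesian_Product.vec_nth (infixl "$" 90)

lemma ug_nbr:
  assumes "undirected_graph N E"
  shows "nbr E i \<subseteq> {..<N}" "finite (nbr E i)" "i \<notin> nbr E i"
proof -
  show 1: "nbr E i \<subseteq> {..<N}" using assms unfolding undirected_graph_def nbr_def by auto
  show "finite (nbr E i)" by (rule finite_subset[OF 1]) auto
  show "i \<notin> nbr E i" using assms unfolding undirected_graph_def nbr_def by auto
qed

lemma ug_sym: "undirected_graph N E \<Longrightarrow> (i,j) \<in> E \<Longrightarrow> (j,i) \<in> E"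
  unfolding undirected_graph_def by blast

lemma ug_sum_swap:
  assumes ug: "undirected_graph N E"
  shows "(\<Sum>i<N. \<Sum>j\<in>nbr E i. f i j) = (\<Sum>i<N. \<Sum>j\<in>nbr E i. f j i)"
proof -
  have Es: "E \<subseteq> {..<N} \<times> {..<N}" using ug unfolding undirected_graph_def by auto
  have sig: "Sigma {..<N} (nbr E) = E" using Es unfolding nbr_def by auto
  have edge_sum: "(\<Sum>i<N. \<Sum>j\<in>nbr E i. g i j) = (\<Sum>p\<in>E. g (fst p) (snd p))"
    for g :: "nat \<Rightarrow> nat \<Rightarrow> 'a"
    by (subst sum.Sigma) (auto simp: ug_nbr[OF ug] sig split_beta)
  have "(\<Sum>p\<in>E. f (snd p) (fst p)) = (\<Sum>p\<in>E. f (fst p) (snd p))"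
    by (rule sum.reindex_bij_witness[where i=prod.swap and j=prod.swap])
       (auto intro: ug_sym[OF ug])
  then show ?thesis using edge_sum[of f] edge_sum[of "\<lambda>i j. f j i"] by simp
qed

text \<open>Every vertex i occurs in exactly |N(i)|+1 closed neighbourhoods.\<close>

lemma ug_cnbr_sum:
  assumes ug: "undirected_graph N E"
  shows "(\<Sum>i<N. \<Sum>j\<in>insert i (nbr E i). f j) = (\<Sum>i<N. (real (card (nbr E i)) + 1) * f i)"
proof -
  have "(\<Sum>i<N. \<Sum>j\<in>insert i (nbr E i). f j) = (\<Sum>i<N. f i + (\<Sum>j\<in>nbr E i. f j))"
    by (intro sum.cong refl, subst sum.insert) (auto simp: ug_nbr[OF ug])
  also have "\<dots> = (\<Sum>i<N. f i) + (\<Sum>i<N. \<Sum>j\<in>nbr E i. f j)"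
    by (rule sum.distrib)
  also have "(\<Sum>i<N. \<Sum>j\<in>nbr E i. f j) = (\<Sum>i<N. \<Sum>j\<in>nbr E i. f i)"
    by (rule ug_sum_swap[OF ug, of "\<lambda>i j. f j"])
  also have "\<dots> = (\<Sum>i<N. real (card (nbr E i)) * f i)"
    by simp
  also have "(\<Sum>i<N. f i) + (\<Sum>i<N. real (card (nbr E i)) * f i)
      = (\<Sum>i<N. (real (card (nbr E i)) + 1) * f i)"
    by (simp add: distrib_right sum.distrib)
  finally show ?thesis .
qed

lemma lap_carrier: "laplacian N E \<in> carrier_mat N N"
  unfolding laplacian_def by simp

lemma lap_mult:
  assumes ug: "undirected_graph N E" and i: "i < N" and x: "x \<in> carrier_vec N"
  shows "(laplacian N E *\<^sub>v x) $ i = real (card (nbr E i)) * x $ i - (\<Sum>j\<in>nbr E i. x $ j)"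
proof -
  have nb: "nbr E i \<subseteq> {0..<N}" using ug_nbr(1)[OF ug, of i] by auto
  have "(laplacian N E *\<^sub>v x) $ i = (\<Sum>j\<in>{0..<N}. (if i = j then real (card (nbr E i))
                                      else if (i, j) \<in> E then -1 else 0) * x $ j)"
    using i x unfolding laplacian_def by (simp add: scalar_prod_def)
  also have "\<dots> = (\<Sum>j\<in>{0..<N}. (if j = i then real (card (nbr E i)) * x $ j else 0)
        + (if j \<in> nbr E i then - x $ j else 0))"
    using ug_nbr(3)[OF ug, of i] by (intro sum.cong refl) (auto simp: nbr_def)
  also have "\<dots> = real (card (nbr E i)) * x $ i - (\<Sum>j\<in>nbr E i. x $ j)"
    using i nb by (simp add: sum.distrib sum.If_cases Int_absorb1 sum_negf)
  finally show ?thesis .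
qed

text \<open>If the vertex set splits into two nonempty parts with no edge between them, the
  indicator vectors of the two parts are independent elements of the kernel of L.\<close>

lemma lap_kernel_dim:
  assumes ug: "undirected_graph N E" and S: "S \<subseteq> {..<N}" "i0 \<in> S" "j0 < N" "j0 \<notin> S"
    and closed: "\<And>i j. (i,j) \<in> E \<Longrightarrow> (i \<in> S \<longleftrightarrow> j \<in> S)"
  shows "2 \<le> kernel_dim (laplacian N E)"
proof -
  let ?L = "laplacian N E"
  interpret K: kernel N N ?L by unfold_locales (rule lap_carrier)
  define u where "u = vec N (\<lambda>k. if k \<in> S then 1 else (0::real))"
  define v where "v = vec N (\<lambda>k. if k \<in> S then 0 else (1::real))"
  have kern: "vec N (\<lambda>k. if k \<in> S then a else b) \<in> mat_kernel ?L" for a b :: real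
  proof (rule mat_kernelI[OF lap_carrier])
    show "?L *\<^sub>v vec N (\<lambda>k. if k \<in> S then a else b) = 0\<^sub>v N"
    proof (rule eq_vecI)
      fix i assume i: "i < dim_vec (0\<^sub>v N :: real vec)"
      then have i: "i < N" by simp
      have "(\<Sum>j\<in>nbr E i. vec N (\<lambda>k. if k \<in> S then a else b) $ j)
          = (\<Sum>j\<in>nbr E i. (if i \<in> S then a else b))"
        using ug_nbr(1)[OF ug, of i] closed by (intro sum.cong refl) (auto simp: nbr_def)
      then show "(?L *\<^sub>v vec N (\<lambda>k. if k \<in> S then a else b)) $ i = 0\<^sub>v N $ i"
        using i by (simp add: lap_mult[OF ug i])
    qed (simp add: lap_carrier[THEN carrier_matD(1)])
  qed simp
  have uk: "u \<in> mat_kernel ?L" and vk: "v \<in> mat_kernel ?L" unfolding u_def v_def by (rule kern)+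
  have i0: "i0 < N" using S by auto
  have "u $ i0 = 1" "v $ i0 = 0" unfolding u_def v_def using i0 S(2) by simp_all
  then have uv: "u \<noteq> v" by auto
  have li: "\<not> K.lin_dep {u,v}"
  proof
    assume "K.lin_dep {u,v}"
    then obtain A a x where A: "finite A" "A \<subseteq> {u,v}" and lc: "K.lincomb a A = 0\<^sub>v N"
      and x: "x \<in> A" "a x \<noteq> 0"
      unfolding K.Ker.lin_dep_def by blast
    have Ak: "A \<subseteq> mat_kernel ?L" using A uk vk by auto
    have idx: "(\<Sum>y\<in>A. a y * y $ k) = 0" if "k < N" for k
      using K.lincomb_index[OF that Ak, of a] lc that by simp
    show False
    proof (cases "x = u")
      case True
      have "(\<Sum>y\<in>A. a y * y $ i0) = (\<Sum>y\<in>A. if y = u then a u else 0)"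
        using A i0 S by (intro sum.cong refl) (auto simp: u_def v_def)
      then have "(\<Sum>y\<in>A. a y * y $ i0) = a u" using A x True by simp
      then show False using idx[OF i0] x True by simp
    next
      case False
      then have xv: "x = v" using x A by auto
      have "(\<Sum>y\<in>A. a y * y $ j0) = (\<Sum>y\<in>A. if y = v then a v else 0)"
        using A S by (intro sum.cong refl) (auto simp: u_def v_def)
      then have "(\<Sum>y\<in>A. a y * y $ j0) = a v" using A x xv by simp
      then show False using idx[OF S(3)] x xv by simp
    qed
  qed
  obtain B where B: "finite B" "K.basis B" using kernel_basis_exists[OF lap_carrier] by blast
  have fd: "K.Ker.fin_dim" unfolding K.Ker.fin_dim_def using B unfolding K.Ker.basis_def by blast
  have "card {u,v} \<le> K.dim" by (rule K.Ker.li_le_dim(2)[OF fd _ li]) (use uk vk in auto)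
  then show ?thesis using uv by simp
qed

lemma order_prod_lin:
  "Polynomial.order a (\<Prod>x\<leftarrow>xs. [:-x, 1:]) = length (filter (\<lambda>x. x = a) xs)" for a :: real
proof (induction xs)
  case (Cons x xs)
  have nz: "(\<Prod>x\<leftarrow>xs. [:-x, 1:]) \<noteq> (0 :: real poly)"
    by (auto simp: prod_list_zero_iff)
  have "Polynomial.order a (\<Prod>x\<leftarrow>x # xs. [:-x, 1:])
      = Polynomial.order a ([:-x, 1:] * (\<Prod>x\<leftarrow>xs. [:-x, 1:]))" by simp
  also have "\<dots> = Polynomial.order a ([:-x, 1:]) + Polynomial.order a (\<Prod>x\<leftarrow>xs. [:-x, 1:])"
    by (rule order_mult) (metis nz mult_eq_0_iff pCons_eq_0_iff zero_neq_one)
  also have "Polynomial.order a ([:-x, 1:]) = (if a = x then 1 else 0)"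
    using order_linear_power[of a "-x" 1] by simp
  finally show ?case using Cons by auto
qed simp

lemma jordan_block_kernel_le:
  fixes n_as :: "(nat \<times> 'a) list"
  shows "(\<Sum>n\<leftarrow>map fst [(n, e)\<leftarrow>n_as . e = a]. min 1 n)
    \<le> sum_list (map fst (filter (\<lambda>na. snd na = a) n_as))"
  by (induction n_as) (auto simp: min_def intro: add_mono)

text \<open>Geometric multiplicity is at most algebraic multiplicity (here for the eigenvalue 0),
  read off from a Jordan normal form: each Jordan block contributes min 1 n to the kernel.\<close>

lemma kernel_le_order:
  fixes A :: "real mat"
  assumes A: "A \<in> carrier_mat n n" and cp: "char_poly A = (\<Prod>a\<leftarrow>as. [:-a, 1:])"
  shows "kernel_dim A \<le> Polynomial.order 0 (char_poly A)"
proof -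
  obtain n_as where jnf: "jordan_nf A n_as" using jordan_nf_exists[OF A cp] by blast
  have cm: "char_matrix A 0 ^\<^sub>m 1 = A"
    using A by (intro eq_matI) (auto simp: char_matrix_def)
  have "kernel_dim A = dim_gen_eigenspace A 0 1" unfolding dim_gen_eigenspace_def cm ..
  also have "\<dots> = (\<Sum>n\<leftarrow>map fst [(n, e)\<leftarrow>n_as . e = 0]. min 1 n)"
    by (rule dim_gen_eigenspace[OF jnf])
  also have "\<dots> \<le> Polynomial.order 0 (char_poly A)"
    using jordan_block_kernel_le[where n_as = n_as and a = 0] by (simp add: jordan_nf_order[OF jnf])
  finally show ?thesis .
qed

text \<open>If lambda_2 > 0 then 0 is a simple eigenvalue of L, so L has a one-dimensional kernel
  and the graph is connected.\<close>

lemma connected_from_eig: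
  assumes ug: "undirected_graph N E" and N2: "2 \<le> N" and eig: "laplacian_eigenvalues N E lams"
    and lam2: "lams ! 1 > 0" and i: "i < N" and j: "j < N"
  shows "(i, j) \<in> E\<^sup>*"
proof (rule ccontr)
  assume nij: "(i, j) \<notin> E\<^sup>*"
  define S where "S = {k. k < N \<and> (i, k) \<in> E\<^sup>*}"
  have Es: "\<And>a b. (a,b) \<in> E \<Longrightarrow> a < N \<and> b < N" using ug unfolding undirected_graph_def by auto
  have closed: "(a \<in> S \<longleftrightarrow> b \<in> S)" if ab: "(a,b) \<in> E" for a b
    using Es[OF ab] ab ug_sym[OF ug ab] unfolding S_def by (auto intro: rtrancl_into_rtrancl)
  have "2 \<le> kernel_dim (laplacian N E)"
    by (rule lap_kernel_dim[OF ug _ _ j, of S i]) (use i nij closed in \<open>auto simp: S_def\<close>)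
  also have "\<dots> \<le> Polynomial.order 0 (char_poly (laplacian N E))"
    using eig unfolding laplacian_eigenvalues_def by (intro kernel_le_order[OF lap_carrier]) auto
  also have "\<dots> = length (filter (\<lambda>x. x = 0) lams)"
    using eig unfolding laplacian_eigenvalues_def by (simp add: order_prod_lin)
  finally have two: "2 \<le> length (filter (\<lambda>x. x = 0) lams)" .
  have len: "length lams = N" and srt: "sorted lams" using eig unfolding laplacian_eigenvalues_def by auto
  obtain x xs where lx: "lams = x # xs" using len N2 by (cases lams) auto
  have "\<forall>y\<in>set xs. y > 0"
  proof
    fix y assume "y \<in> set xs"
    then obtain k where k: "k < length xs" "xs ! k = y" by (auto simp: in_set_conv_nth)
    have "lams ! 1 \<le> lams ! Suc k" using srt k lx by (intro sorted_nth_mono) auto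
    then show "y > 0" using lam2 k lx by simp
  qed
  then have "filter (\<lambda>x. x = 0) xs = []" by (auto simp: filter_empty_conv)
  then show False using two lx by (cases "x = 0") auto
qed

lemma linear_recursion_unroll:
  fixes a b :: "nat \<Rightarrow> real"
  assumes r: "0 \<le> r" "r < 1" and step: "\<And>t. a (Suc t) \<le> r * a t + b t"
    and small: "\<And>t. m \<le> t \<Longrightarrow> b t \<le> \<delta>" and \<delta>: "0 \<le> \<delta>"
  shows "a (m + n) \<le> r ^ n * a m + \<delta> / (1 - r)"
proof (induction n)
  case 0
  then show ?case using r \<delta> by simp
next
  case (Suc n)
  have "a (m + Suc n) \<le> r * a (m + n) + b (m + n)" using step[of "m + n"] by simp
  also have "\<dots> \<le> r * (r ^ n * a m + \<delta> / (1 - r)) + \<delta>"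
    using Suc r small[of "m + n"] by (intro add_mono mult_left_mono) auto
  also have "\<dots> = r ^ Suc n * a m + \<delta> / (1 - r)"
    using r by (simp add: field_simps)
  finally show ?case .
qed

lemma linear_recursion_tendsto_zero:
  fixes a b :: "nat \<Rightarrow> real"
  assumes r: "0 \<le> r" "r < 1" and a0: "\<And>t. 0 \<le> a t"
    and step: "\<And>t. a (Suc t) \<le> r * a t + b t" and b: "b \<longlonglongrightarrow> 0"
  shows "a \<longlonglongrightarrow> 0"
proof (rule LIMSEQ_I)
  fix \<epsilon> :: real assume e: "0 < \<epsilon>"
  define \<delta> where "\<delta> = \<epsilon> * (1 - r) / 2"
  have "0 < \<delta>" using e r unfolding \<delta>_def by simp
  then obtain T0 where T0: "\<And>t. t \<ge> T0 \<Longrightarrow> norm (b t - 0) < \<delta>" using LIMSEQ_D[OF b] by blast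
  have "1 - r \<noteq> 0" "2 - 2 * r \<noteq> 0" using r by simp_all
  then have d_eq: "\<delta> / (1 - r) = \<epsilon> / 2" unfolding \<delta>_def by (simp add: field_simps)
  have small: "b t \<le> \<delta>" if "T0 \<le> t" for t
    using T0[OF that] by (auto simp: abs_less_iff)
  have unroll: "a (T0 + n) \<le> r ^ n * a T0 + \<epsilon> / 2" for n
    using linear_recursion_unroll[where a = a and b = b and m = T0 and n = n,
        OF r step small less_imp_le[OF \<open>0 < \<delta>\<close>]]
    unfolding d_eq .
  have "(\<lambda>n. r ^ n * a T0) \<longlonglongrightarrow> 0"
    by (rule tendsto_mult_left_zero) (rule LIMSEQ_power_zero, use r in auto)
  then obtain n1 where n1: "\<And>n. n \<ge> n1 \<Longrightarrow> norm (r ^ n * a T0 - 0) < \<epsilon> / 2"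
    using LIMSEQ_D e by (metis half_gt_zero)
  show "\<exists>no. \<forall>n\<ge>no. norm (a n - 0) < \<epsilon>"
  proof (intro exI allI impI)
    fix t assume t: "T0 + n1 \<le> t"
    have "a t \<le> r ^ (t - T0) * a T0 + \<epsilon> / 2" using unroll[of "t - T0"] t by simp
    moreover have "\<bar>r ^ (t - T0) * a T0\<bar> < \<epsilon> / 2" using n1[of "t - T0"] t by simp
    ultimately show "norm (a t - 0) < \<epsilon>"
      using a0[of t] abs_ge_self[of "r ^ (t - T0) * a T0"] by simp
  qed
qed

definition wt :: "(nat \<times> nat) set \<Rightarrow> nat \<Rightarrow> real" where
  "wt E i = real (card (nbr E i)) + 1"

definition gam :: "(nat \<times> nat) set \<Rightarrow> (nat \<Rightarrow> real) \<Rightarrow> nat \<Rightarrow> real" where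
  "gam E \<sigma> i = wt E i / \<sigma> i"

definition Tm :: "(nat \<times> nat) set \<Rightarrow> (nat \<Rightarrow> real) \<Rightarrow> (nat \<Rightarrow> real) \<Rightarrow> nat \<Rightarrow> real" where
  "Tm E \<sigma> x i = (1 - \<sigma> i) * x i + \<sigma> i * (\<Sum>j\<in>insert i (nbr E i). x j) / wt E i"

definition Gam :: "nat \<Rightarrow> (nat \<times> nat) set \<Rightarrow> (nat \<Rightarrow> real) \<Rightarrow> real" where
  "Gam N E \<sigma> = (\<Sum>i<N. gam E \<sigma> i)"

definition mean :: "nat \<Rightarrow> (nat \<times> nat) set \<Rightarrow> (nat \<Rightarrow> real) \<Rightarrow> (nat \<Rightarrow> real) \<Rightarrow> real" where
  "mean N E \<sigma> x = (\<Sum>i<N. gam E \<sigma> i * x i) / Gam N E \<sigma>"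

definition Vf :: "nat \<Rightarrow> (nat \<times> nat) set \<Rightarrow> (nat \<Rightarrow> real) \<Rightarrow> (nat \<Rightarrow> real) \<Rightarrow> real" where
  "Vf N E \<sigma> x = (\<Sum>i<N. gam E \<sigma> i * (x i - mean N E \<sigma> x)^2)"

definition Ed :: "nat \<Rightarrow> (nat \<times> nat) set \<Rightarrow> (nat \<Rightarrow> real) \<Rightarrow> real" where
  "Ed N E x = (\<Sum>i<N. \<Sum>j\<in>nbr E i. (x i - x j)^2)"

lemma theta_step:
  "theta_state N E \<sigma> th0 e (Suc t) i =
     Tm E \<sigma> (theta_state N E \<sigma> th0 e t) i + \<sigma> i * (\<Sum>j\<in>insert i (nbr E i). e j t) / wt E i"
  by (simp add: Tm_def wt_def sum.distrib add_divide_distrib distrib_left)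

lemma wt_pos: "0 < wt E i"
  unfolding wt_def by simp

lemma sq_split:
  fixes a b \<epsilon> :: real
  assumes e: "0 < \<epsilon>"
  shows "(a + b)^2 \<le> (1 + \<epsilon>) * a^2 + (1 + 1/\<epsilon>) * b^2"
proof -
  have "(1 + \<epsilon>) * a^2 + (1 + 1/\<epsilon>) * b^2 - (a + b)^2 = (\<epsilon> * a - b)^2 / \<epsilon>"
    using e by (simp add: field_simps power2_eq_square)
  also have "\<dots> \<ge> 0" using e by simp
  finally show ?thesis by simp
qed

lemma weighted_noise_summable:
  fixes e :: "nat \<Rightarrow> nat \<Rightarrow> real" and w :: "nat \<Rightarrow> real"
  assumes "\<forall>j<N. summable (\<lambda>t. \<bar>e j t\<bar>)"
  shows "summable (\<lambda>t. \<Sum>j<N. w j * e j t)"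
proof -
  have "summable (e j)" if "j < N" for j
    using assms that summable_rabs_cancel by blast
  then show ?thesis by (intro summable_sum summable_mult) auto
qed

locale weighted_consensus =
  fixes N :: nat and E :: "(nat \<times> nat) set" and \<sigma> :: "nat \<Rightarrow> real"
  assumes ug: "undirected_graph N E" and sig: "\<forall>i<N. 0 < \<sigma> i \<and> \<sigma> i < 1" and Npos: "0 < N"
begin

lemma gam_pos: "i < N \<Longrightarrow> 0 < gam E \<sigma> i"
  using sig wt_pos[of E i] unfolding gam_def by auto

lemma Gam_pos: "0 < Gam N E \<sigma>"
  unfolding Gam_def using gam_pos Npos by (intro sum_pos) auto

lemma gam_sig: "i < N \<Longrightarrow> gam E \<sigma> i * \<sigma> i = wt E i"
  using sig unfolding gam_def by auto

lemma Ed_nonneg: "0 \<le> Ed N E x"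
  unfolding Ed_def by (intro sum_nonneg) auto

lemma Vf_nonneg: "0 \<le> Vf N E \<sigma> x"
  unfolding Vf_def by (intro sum_nonneg mult_nonneg_nonneg) (auto simp: less_imp_le gam_pos)

lemma cnbr_wt: "(\<Sum>i<N. \<Sum>j\<in>insert i (nbr E i). f j) = (\<Sum>i<N. wt E i * f i)"
  using ug_cnbr_sum[OF ug] unfolding wt_def .

lemma Tm_wsum: "(\<Sum>i<N. gam E \<sigma> i * Tm E \<sigma> x i) = (\<Sum>i<N. gam E \<sigma> i * x i)"
proof -
  have "(\<Sum>i<N. gam E \<sigma> i * Tm E \<sigma> x i)
      = (\<Sum>i<N. gam E \<sigma> i * x i - wt E i * x i + (\<Sum>j\<in>insert i (nbr E i). x j))"
  proof (intro sum.cong refl)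
    fix i assume "i \<in> {..<N}"
    then have g: "gam E \<sigma> i * \<sigma> i = wt E i" by (simp add: gam_sig)
    have w: "wt E i \<noteq> 0" using wt_pos[of E i] by simp
    have "gam E \<sigma> i * Tm E \<sigma> x i = gam E \<sigma> i * x i - (gam E \<sigma> i * \<sigma> i) * x i
        + ((gam E \<sigma> i * \<sigma> i) / wt E i) * (\<Sum>j\<in>insert i (nbr E i). x j)"
      using w unfolding Tm_def by (simp add: field_simps)
    then show "gam E \<sigma> i * Tm E \<sigma> x i
        = gam E \<sigma> i * x i - wt E i * x i + (\<Sum>j\<in>insert i (nbr E i). x j)"
      unfolding g using w by simp
  qed
  also have "\<dots> = (\<Sum>i<N. gam E \<sigma> i * x i)"
    by (simp add: sum.distrib sum_subtractf cnbr_wt)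
  finally show ?thesis .
qed

lemma noise_wsum:
  "(\<Sum>i<N. gam E \<sigma> i * (\<sigma> i * (\<Sum>j\<in>insert i (nbr E i). e j) / wt E i)) = (\<Sum>i<N. wt E i * e i)"
proof -
  have "(\<Sum>i<N. gam E \<sigma> i * (\<sigma> i * (\<Sum>j\<in>insert i (nbr E i). e j) / wt E i))
      = (\<Sum>i<N. \<Sum>j\<in>insert i (nbr E i). e j)"
  proof (intro sum.cong refl)
    fix i assume "i \<in> {..<N}"
    then have g: "gam E \<sigma> i * \<sigma> i = wt E i" by (simp add: gam_sig)
    have w: "wt E i \<noteq> 0" using wt_pos[of E i] by simp
    show "gam E \<sigma> i * (\<sigma> i * (\<Sum>j\<in>insert i (nbr E i). e j) / wt E i)
        = (\<Sum>j\<in>insert i (nbr E i). e j)"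
      using g w by (simp add: field_simps)
  qed
  then show ?thesis using cnbr_wt by simp
qed

lemma mean_Tm: "mean N E \<sigma> (Tm E \<sigma> x) = mean N E \<sigma> x"
  unfolding mean_def Tm_wsum ..

lemma Tm_shift: "i < N \<Longrightarrow> Tm E \<sigma> (\<lambda>j. x j - c) i = Tm E \<sigma> x i - c"
proof -
  assume i: "i < N"
  have w: "wt E i \<noteq> 0" using wt_pos[of E i] by simp
  have "real (card (insert i (nbr E i))) = wt E i"
    using ug_nbr[OF ug, of i] unfolding wt_def by simp
  then have se: "(\<Sum>j\<in>insert i (nbr E i). x j - c) = (\<Sum>j\<in>insert i (nbr E i). x j) - wt E i * c"
    by (simp add: sum_subtractf)
  show ?thesis unfolding Tm_def se using w by (simp add: field_simps)
qed

lemma Tm_lap: "i < N \<Longrightarrow> Tm E \<sigma> y i = y i - (\<sigma> i / wt E i) * (\<Sum>j\<in>nbr E i. y i - y j)"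
proof -
  assume i: "i < N"
  have w: "wt E i \<noteq> 0" using wt_pos[of E i] by simp
  have s1: "(\<Sum>j\<in>insert i (nbr E i). y j) = y i + (\<Sum>j\<in>nbr E i. y j)"
    using ug_nbr[OF ug, of i] by simp
  have s2: "(\<Sum>j\<in>nbr E i. y i - y j) = real (card (nbr E i)) * y i - (\<Sum>j\<in>nbr E i. y j)"
    by (simp add: sum_subtractf)
  show ?thesis unfolding Tm_def s1 s2 using w unfolding wt_def by (simp add: field_simps)
qed

lemma lap_quadratic_form: "(\<Sum>i<N. y i * (\<Sum>j\<in>nbr E i. y i - y j)) = Ed N E y / 2"
proof -
  have a: "(\<Sum>i<N. y i * (\<Sum>j\<in>nbr E i. y i - y j)) = (\<Sum>i<N. \<Sum>j\<in>nbr E i. y i * (y i - y j))"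
    by (simp add: sum_distrib_left)
  have b: "(\<Sum>i<N. \<Sum>j\<in>nbr E i. y i * (y i - y j)) = (\<Sum>i<N. \<Sum>j\<in>nbr E i. y j * (y j - y i))"
    by (rule ug_sum_swap[OF ug])
  have c: "(\<Sum>i<N. \<Sum>j\<in>nbr E i. y i * (y i - y j)) + (\<Sum>i<N. \<Sum>j\<in>nbr E i. y j * (y j - y i))
      = Ed N E y"
    unfolding Ed_def sum.distrib[symmetric]
    by (intro sum.cong refl) (simp add: power2_eq_square algebra_simps)
  show ?thesis using a b c by simp
qed

text \<open>Energy dissipation: one noiseless round decreases the weighted second moment by at
  least beta times the Dirichlet energy, whenever every sigma_i is at most 1 - beta.
  (Cauchy-Schwarz bounds (L y)_i^2 by |N(i)| times the local energy.)\<close>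

lemma decrease:
  assumes beta: "0 \<le> \<beta>" "\<forall>i<N. \<sigma> i \<le> 1 - \<beta>"
  shows "(\<Sum>i<N. gam E \<sigma> i * (Tm E \<sigma> y i)^2) \<le> (\<Sum>i<N. gam E \<sigma> i * (y i)^2) - \<beta> * Ed N E y"
proof -
  define Ly where "Ly i = (\<Sum>j\<in>nbr E i. y i - y j)" for i
  define D where "D i = (\<Sum>j\<in>nbr E i. (y i - y j)^2)" for i
  have pt: "gam E \<sigma> i * (Tm E \<sigma> y i)^2 \<le> gam E \<sigma> i * (y i)^2 - 2 * (y i * Ly i) + (1 - \<beta>) * D i"
    if i: "i < N" for i
  proof -
    have g: "gam E \<sigma> i * (\<sigma> i / wt E i) = 1" using gam_sig[OF i] wt_pos[of E i] by simp
    have s: "0 < \<sigma> i" "\<sigma> i \<le> 1 - \<beta>" using sig beta i by auto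
    have w: "0 < wt E i" by (rule wt_pos)
    have "gam E \<sigma> i * (Tm E \<sigma> y i)^2 = gam E \<sigma> i * (y i - (\<sigma> i / wt E i) * Ly i)^2"
      using Tm_lap[OF i] unfolding Ly_def by simp
    also have "\<dots> = gam E \<sigma> i * (y i)^2 - 2 * (gam E \<sigma> i * (\<sigma> i / wt E i)) * (y i * Ly i)
          + (gam E \<sigma> i * (\<sigma> i / wt E i)) * (\<sigma> i / wt E i) * (Ly i)^2"
      by (simp add: power2_eq_square algebra_simps)
    finally have eq: "gam E \<sigma> i * (Tm E \<sigma> y i)^2
        = gam E \<sigma> i * (y i)^2 - 2 * (y i * Ly i) + (\<sigma> i / wt E i) * (Ly i)^2"
      unfolding g by simp
    have cs: "(Ly i)^2 \<le> D i * real (card (nbr E i))"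
      unfolding Ly_def D_def by (rule sum_squared_le_sum_of_squares)
    have D0: "0 \<le> D i" unfolding D_def by (intro sum_nonneg) auto
    have "(\<sigma> i / wt E i) * (Ly i)^2 \<le> (\<sigma> i / wt E i) * (D i * real (card (nbr E i)))"
      using cs s w by (intro mult_left_mono) auto
    also have "\<dots> = \<sigma> i * D i * (real (card (nbr E i)) / wt E i)" by simp
    also have "\<dots> \<le> \<sigma> i * D i * 1"
      using s D0 w unfolding wt_def by (intro mult_left_mono) auto
    also have "\<dots> \<le> (1 - \<beta>) * D i" using s D0 by (simp add: mult_right_mono)
    finally show ?thesis using eq by simp
  qed
  have "(\<Sum>i<N. gam E \<sigma> i * (Tm E \<sigma> y i)^2)
      \<le> (\<Sum>i<N. gam E \<sigma> i * (y i)^2 - 2 * (y i * Ly i) + (1 - \<beta>) * D i)"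
    using pt by (intro sum_mono) auto
  also have "\<dots> = (\<Sum>i<N. gam E \<sigma> i * (y i)^2) - 2 * (\<Sum>i<N. y i * Ly i) + (1 - \<beta>) * Ed N E y"
    unfolding Ed_def D_def by (simp add: sum.distrib sum_subtractf sum_distrib_left)
  also have "\<dots> = (\<Sum>i<N. gam E \<sigma> i * (y i)^2) - \<beta> * Ed N E y"
    unfolding Ly_def lap_quadratic_form by (simp add: algebra_simps)
  finally show ?thesis .
qed

text \<open>Discrete Poincare inequality: along a path from i to j the squared difference
  x_i - x_j is bounded by a multiple of the Dirichlet energy.\<close>

lemma edge_le_Ed:
  assumes ab: "(a, b) \<in> E"
  shows "(x a - x b)^2 \<le> Ed N E x"
proof -
  have a: "a < N" and b: "b \<in> nbr E a" using ab ug unfolding undirected_graph_def nbr_def by auto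
  have "(x a - x b)^2 \<le> (\<Sum>j\<in>nbr E a. (x a - x j)^2)"
    by (rule member_le_sum[OF b]) (auto simp: ug_nbr[OF ug])
  also have "\<dots> \<le> (\<Sum>i<N. \<Sum>j\<in>nbr E i. (x i - x j)^2)"
    by (rule member_le_sum[where f = "\<lambda>i. \<Sum>j\<in>nbr E i. (x i - x j)^2"])
       (use a in \<open>auto intro: sum_nonneg\<close>)
  finally show ?thesis unfolding Ed_def .
qed

lemma path_bound:
  assumes "(i, j) \<in> E\<^sup>*"
  shows "\<exists>K\<ge>0. \<forall>x::nat\<Rightarrow>real. (x i - x j)^2 \<le> K * Ed N E x"
  using assms
proof (induction rule: rtrancl_induct)
  case base
  then show ?case by (intro exI[of _ 0]) simp
next
  case (step j k)
  then obtain K where K: "K \<ge> 0" "\<And>x::nat\<Rightarrow>real. (x i - x j)^2 \<le> K * Ed N E x" by blast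
  show ?case
  proof (intro exI[of _ "2 * K + 2"] conjI allI)
    show "0 \<le> 2 * K + 2" using K by simp
    fix x :: "nat \<Rightarrow> real"
    have "2 * (x i - x j)^2 + 2 * (x j - x k)^2 - (x i - x k)^2 = (x i - 2 * x j + x k)^2"
      by (simp add: power2_eq_square algebra_simps)
    then have "(x i - x k)^2 \<le> 2 * (x i - x j)^2 + 2 * (x j - x k)^2"
      by (metis diff_ge_0_iff_ge zero_le_power2)
    also have "\<dots> \<le> 2 * (K * Ed N E x) + 2 * Ed N E x"
      using K(2)[of x] edge_le_Ed[OF step(2), of x] by simp
    also have "\<dots> = (2 * K + 2) * Ed N E x" by (simp add: algebra_simps)
    finally show "(x i - x k)^2 \<le> (2 * K + 2) * Ed N E x" .
  qed
qed

lemma poincare: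
  assumes conn: "\<forall>i<N. \<forall>j<N. (i, j) \<in> E\<^sup>*"
  shows "\<exists>K>0. \<forall>x i j. i < N \<longrightarrow> j < N \<longrightarrow> (x i - x j)^2 \<le> K * Ed N E x"
proof -
  have "\<forall>p\<in>{..<N} \<times> {..<N}. \<exists>K\<ge>0. \<forall>x. (x (fst p) - x (snd p))^2 \<le> K * Ed N E x"
    using conn path_bound by auto
  then obtain Kf where Kf: "\<And>p. p \<in> {..<N} \<times> {..<N} \<Longrightarrow>
      Kf p \<ge> 0 \<and> (\<forall>x. (x (fst p) - x (snd p))^2 \<le> Kf p * Ed N E x)"
    by metis
  define K where "K = 1 + (\<Sum>p\<in>{..<N} \<times> {..<N}. Kf p)"
  have Kpos: "K > 0" unfolding K_def using Kf by (smt (verit) sum_nonneg)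
  show ?thesis
  proof (intro exI[of _ K] conjI allI impI Kpos)
    fix x i j assume ij: "i < N" "j < N"
    have p: "(i, j) \<in> {..<N} \<times> {..<N}" using ij by auto
    have "Kf (i, j) \<le> (\<Sum>p\<in>{..<N} \<times> {..<N}. Kf p)"
      by (rule member_le_sum[OF p]) (use Kf in auto)
    then have "Kf (i, j) * Ed N E x \<le> K * Ed N E x"
      unfolding K_def by (intro mult_right_mono Ed_nonneg) simp
    moreover have "(x i - x j)^2 \<le> Kf (i, j) * Ed N E x" using Kf[OF p] by auto
    ultimately show "(x i - x j)^2 \<le> K * Ed N E x" by linarith
  qed
qed

lemma mean_diff: "i < N \<Longrightarrow> x i - mean N E \<sigma> x = (\<Sum>j<N. gam E \<sigma> j * (x i - x j)) / Gam N E \<sigma>"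
proof -
  assume i: "i < N"
  have G: "Gam N E \<sigma> \<noteq> 0" using Gam_pos by simp
  have "(\<Sum>j<N. gam E \<sigma> j * (x i - x j)) = Gam N E \<sigma> * x i - (\<Sum>j<N. gam E \<sigma> j * x j)"
    unfolding Gam_def by (simp add: right_diff_distrib sum_subtractf sum_distrib_right)
  then show ?thesis unfolding mean_def using G by (simp add: field_simps)
qed

lemma Vf_le_Ed:
  assumes K: "K > 0" "\<forall>x i j. i < N \<longrightarrow> j < N \<longrightarrow> (x i - x j)^2 \<le> K * Ed N E x"
  shows "Vf N E \<sigma> x \<le> Gam N E \<sigma> * K * Ed N E x"
proof -
  define s where "s = sqrt (K * Ed N E x)"
  have KE: "0 \<le> K * Ed N E x" using K(1) Ed_nonneg by simp
  have s0: "0 \<le> s" unfolding s_def using KE by simp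
  have G: "0 < Gam N E \<sigma>" using Gam_pos .
  have pt: "(x i - mean N E \<sigma> x)^2 \<le> K * Ed N E x" if i: "i < N" for i
  proof -
    have dj: "\<bar>x i - x j\<bar> \<le> s" if j: "j < N" for j
      using real_sqrt_le_mono[of "(x i - x j)^2" "K * Ed N E x"] K(2) i j unfolding s_def by auto
    have "\<bar>\<Sum>j<N. gam E \<sigma> j * (x i - x j)\<bar> \<le> (\<Sum>j<N. \<bar>gam E \<sigma> j * (x i - x j)\<bar>)"
      by (rule sum_abs)
    also have "\<dots> \<le> (\<Sum>j<N. gam E \<sigma> j * s)"
      using dj gam_pos by (intro sum_mono) (simp add: abs_mult mult_left_mono less_imp_le)
    also have "\<dots> = Gam N E \<sigma> * s" unfolding Gam_def by (simp add: sum_distrib_right)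
    finally have "\<bar>x i - mean N E \<sigma> x\<bar> \<le> s"
      using mean_diff[OF i] G by (simp add: divide_le_eq mult.commute)
    then have "\<bar>x i - mean N E \<sigma> x\<bar>^2 \<le> s^2" using s0 by (intro power_mono) auto
    then show ?thesis unfolding s_def using KE by simp
  qed
  have "Vf N E \<sigma> x \<le> (\<Sum>i<N. gam E \<sigma> i * (K * Ed N E x))"
    unfolding Vf_def using gam_pos pt
    by (intro sum_mono mult_left_mono) (auto intro: less_imp_le)
  also have "\<dots> = Gam N E \<sigma> * K * Ed N E x"
    unfolding Gam_def by (simp add: sum_distrib_right mult.assoc)
  finally show ?thesis .
qed

text \<open>Contraction: combining dissipation with the Poincare bound, the noiseless update shrinks
  the weighted variance by the factor Gamma K / (Gamma K + beta) < 1.\<close>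

lemma contraction:
  assumes beta: "0 < \<beta>" "\<forall>i<N. \<sigma> i \<le> 1 - \<beta>"
    and K: "K > 0" "\<forall>x i j. i < N \<longrightarrow> j < N \<longrightarrow> (x i - x j)^2 \<le> K * Ed N E x"
  shows "Vf N E \<sigma> (Tm E \<sigma> x) \<le> (Gam N E \<sigma> * K / (Gam N E \<sigma> * K + \<beta>)) * Vf N E \<sigma> x"
proof -
  define m where "m = mean N E \<sigma> x"
  define y where "y j = x j - m" for j
  have "Vf N E \<sigma> (Tm E \<sigma> x) = (\<Sum>i<N. gam E \<sigma> i * (Tm E \<sigma> y i)^2)"
    unfolding Vf_def mean_Tm m_def[symmetric] y_def
    by (intro sum.cong refl) (simp add: Tm_shift)
  also have "\<dots> \<le> (\<Sum>i<N. gam E \<sigma> i * (y i)^2) - \<beta> * Ed N E y"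
    by (rule decrease) (use beta in auto)
  also have "\<dots> = Vf N E \<sigma> x - \<beta> * Ed N E x"
    unfolding Vf_def y_def m_def Ed_def by simp
  finally have dissip: "Vf N E \<sigma> (Tm E \<sigma> x) \<le> Vf N E \<sigma> x - \<beta> * Ed N E x" .
  define GK where "GK = Gam N E \<sigma> * K"
  have GK: "0 < GK" unfolding GK_def using Gam_pos K by simp
  have VE: "Vf N E \<sigma> x \<le> GK * Ed N E x" unfolding GK_def by (rule Vf_le_Ed[OF K])
  have "\<beta> * Vf N E \<sigma> x \<le> \<beta> * (GK * Ed N E x)" using VE beta(1) by simp
  moreover have "0 \<le> \<beta> * (\<beta> * Ed N E x)" using beta(1) Ed_nonneg by simp
  moreover have "(GK + \<beta>) * (Vf N E \<sigma> x - \<beta> * Ed N E x)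
      = GK * Vf N E \<sigma> x + (\<beta> * Vf N E \<sigma> x - \<beta> * (GK * Ed N E x)) - \<beta> * (\<beta> * Ed N E x)"
    by (simp add: algebra_simps)
  ultimately have "(GK + \<beta>) * (Vf N E \<sigma> x - \<beta> * Ed N E x) \<le> GK * Vf N E \<sigma> x" by linarith
  then have "Vf N E \<sigma> x - \<beta> * Ed N E x \<le> GK * Vf N E \<sigma> x / (GK + \<beta>)"
    using GK beta(1) by (simp add: pos_le_divide_eq mult.commute)
  then show ?thesis using dissip unfolding GK_def by simp
qed

lemma mean_add: "mean N E \<sigma> (\<lambda>i. z i + u i) = mean N E \<sigma> z + mean N E \<sigma> u"
  unfolding mean_def by (simp add: distrib_left sum.distrib add_divide_distrib)

lemma Vf_le_sq: "Vf N E \<sigma> u \<le> (\<Sum>i<N. gam E \<sigma> i * (u i)^2)"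
proof -
  define m where "m = mean N E \<sigma> u"
  have G: "0 < Gam N E \<sigma>" using Gam_pos .
  have su: "(\<Sum>i<N. gam E \<sigma> i * u i) = m * Gam N E \<sigma>" unfolding m_def mean_def using G by simp
  have "Vf N E \<sigma> u = (\<Sum>i<N. gam E \<sigma> i * (u i)^2 - 2 * m * (gam E \<sigma> i * u i) + m^2 * gam E \<sigma> i)"
    unfolding Vf_def m_def[symmetric] by (intro sum.cong refl) (simp add: power2_eq_square algebra_simps)
  also have "\<dots> = (\<Sum>i<N. gam E \<sigma> i * (u i)^2) - 2 * m * (\<Sum>i<N. gam E \<sigma> i * u i) + m^2 * Gam N E \<sigma>"
    unfolding Gam_def by (simp add: sum.distrib sum_subtractf sum_distrib_left)
  also have "\<dots> = (\<Sum>i<N. gam E \<sigma> i * (u i)^2) - m^2 * Gam N E \<sigma>"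
    unfolding su by (simp add: power2_eq_square)
  also have "\<dots> \<le> (\<Sum>i<N. gam E \<sigma> i * (u i)^2)" using G by simp
  finally show ?thesis .
qed

lemma noise_step:
  assumes e: "0 < \<epsilon>"
  shows "Vf N E \<sigma> (\<lambda>i. z i + u i)
    \<le> (1 + \<epsilon>) * Vf N E \<sigma> z + (1 + 1/\<epsilon>) * (\<Sum>i<N. gam E \<sigma> i * (u i)^2)"
proof -
  have "Vf N E \<sigma> (\<lambda>i. z i + u i)
      = (\<Sum>i<N. gam E \<sigma> i * ((z i - mean N E \<sigma> z) + (u i - mean N E \<sigma> u))^2)"
    unfolding Vf_def mean_add by (intro sum.cong refl) (simp add: algebra_simps)
  also have "\<dots> \<le> (\<Sum>i<N. gam E \<sigma> i * ((1 + \<epsilon>) * (z i - mean N E \<sigma> z)^2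
                                        + (1 + 1/\<epsilon>) * (u i - mean N E \<sigma> u)^2))"
    using gam_pos sq_split[OF e]
    by (intro sum_mono mult_left_mono) (auto intro: less_imp_le)
  also have "\<dots> = (1 + \<epsilon>) * Vf N E \<sigma> z + (1 + 1/\<epsilon>) * Vf N E \<sigma> u"
    unfolding Vf_def by (simp add: sum.distrib sum_distrib_left algebra_simps)
  also have "\<dots> \<le> (1 + \<epsilon>) * Vf N E \<sigma> z + (1 + 1/\<epsilon>) * (\<Sum>i<N. gam E \<sigma> i * (u i)^2)"
    using Vf_le_sq[of u] e by (intro add_left_mono mult_left_mono) auto
  finally show ?thesis .
qed

lemma noisy_contraction:
  assumes conn: "\<forall>i<N. \<forall>j<N. (i, j) \<in> E\<^sup>*"
  obtains r C where "0 \<le> r" "r < 1"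
    "\<And>x u. Vf N E \<sigma> (\<lambda>i. Tm E \<sigma> x i + u i) \<le> r * Vf N E \<sigma> x + C * (\<Sum>i<N. gam E \<sigma> i * (u i)^2)"
proof -
  define \<beta> where "\<beta> = 1 - Max (\<sigma> ` {..<N})"
  have fin: "finite (\<sigma> ` {..<N})" "\<sigma> ` {..<N} \<noteq> {}" using Npos by auto
  have b0: "0 < \<beta>" unfolding \<beta>_def using fin sig by (subst diff_gt_0_iff_gt, subst Max_less_iff) auto
  have bs: "\<forall>i<N. \<sigma> i \<le> 1 - \<beta>" unfolding \<beta>_def using fin by (auto intro: Max_ge)
  obtain K where K: "K > 0" "\<forall>x i j. i < N \<longrightarrow> j < N \<longrightarrow> (x i - x j)^2 \<le> K * Ed N E x"
    using poincare[OF conn] by blast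
  define \<rho> where "\<rho> = Gam N E \<sigma> * K / (Gam N E \<sigma> * K + \<beta>)"
  have GK: "0 < Gam N E \<sigma> * K" using Gam_pos K by simp
  have r0: "0 < \<rho>" and r1: "\<rho> < 1" unfolding \<rho>_def using GK b0 by simp_all
  define \<epsilon> where "\<epsilon> = (1 - \<rho>) / (2 * \<rho>)"
  have e0: "0 < \<epsilon>" unfolding \<epsilon>_def using r0 r1 by simp
  have rate: "(1 + \<epsilon>) * \<rho> = (1 + \<rho>) / 2" unfolding \<epsilon>_def using r0 by (simp add: field_simps)
  show thesis
  proof
    show "0 \<le> (1 + \<rho>) / 2" "(1 + \<rho>) / 2 < 1" using r0 r1 by simp_all
    fix x u
    have "Vf N E \<sigma> (\<lambda>i. Tm E \<sigma> x i + u i)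
        \<le> (1 + \<epsilon>) * Vf N E \<sigma> (Tm E \<sigma> x) + (1 + 1/\<epsilon>) * (\<Sum>i<N. gam E \<sigma> i * (u i)^2)"
      by (rule noise_step[OF e0])
    also have "(1 + \<epsilon>) * Vf N E \<sigma> (Tm E \<sigma> x) \<le> (1 + \<epsilon>) * (\<rho> * Vf N E \<sigma> x)"
      unfolding \<rho>_def using e0 by (intro mult_left_mono contraction[OF b0 bs K]) auto
    finally show "Vf N E \<sigma> (\<lambda>i. Tm E \<sigma> x i + u i)
        \<le> (1 + \<rho>) / 2 * Vf N E \<sigma> x + (1 + 1/\<epsilon>) * (\<Sum>i<N. gam E \<sigma> i * (u i)^2)"
      by (simp add: rate[symmetric] mult.assoc)
  qed
qed

lemma theta_wsum:
  "(\<Sum>i<N. gam E \<sigma> i * theta_state N E \<sigma> th0 e t i)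
     = (\<Sum>i<N. gam E \<sigma> i * th0 i) + (\<Sum>s<t. \<Sum>j<N. wt E j * e j s)"
proof (induction t)
  case (Suc t)
  have "(\<Sum>i<N. gam E \<sigma> i * theta_state N E \<sigma> th0 e (Suc t) i)
      = (\<Sum>i<N. gam E \<sigma> i * Tm E \<sigma> (theta_state N E \<sigma> th0 e t) i)
        + (\<Sum>i<N. gam E \<sigma> i * (\<sigma> i * (\<Sum>j\<in>insert i (nbr E i). e j t) / wt E i))"
    unfolding theta_step by (simp add: distrib_left sum.distrib)
  also have "\<dots> = (\<Sum>i<N. gam E \<sigma> i * theta_state N E \<sigma> th0 e t i) + (\<Sum>j<N. wt E j * e j t)"
    unfolding Tm_wsum noise_wsum ..
  finally show ?case using Suc by simp
qed simp

lemma deviation_tendsto_zero: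
  assumes V: "(\<lambda>t. Vf N E \<sigma> (x t)) \<longlonglongrightarrow> 0" and i: "i < N"
  shows "(\<lambda>t. x t i - mean N E \<sigma> (x t)) \<longlonglongrightarrow> 0"
proof -
  have g: "0 < gam E \<sigma> i" by (rule gam_pos[OF i])
  have le: "(x t i - mean N E \<sigma> (x t))^2 \<le> Vf N E \<sigma> (x t) / gam E \<sigma> i" for t
  proof -
    have "gam E \<sigma> i * (x t i - mean N E \<sigma> (x t))^2 \<le> Vf N E \<sigma> (x t)"
      unfolding Vf_def
      by (rule member_le_sum[where f = "\<lambda>i. gam E \<sigma> i * (x t i - mean N E \<sigma> (x t))^2"])
         (use i in \<open>auto intro!: mult_nonneg_nonneg simp: less_imp_le gam_pos\<close>)
    then show ?thesis using g by (simp add: pos_le_divide_eq mult.commute)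
  qed
  have "(\<lambda>t. (x t i - mean N E \<sigma> (x t))^2) \<longlonglongrightarrow> 0"
  proof (rule tendsto_sandwich[where f = "\<lambda>_. 0" and h = "\<lambda>t. Vf N E \<sigma> (x t) / gam E \<sigma> i"])
    show "\<forall>\<^sub>F t in sequentially. 0 \<le> (x t i - mean N E \<sigma> (x t))^2" by simp
    show "\<forall>\<^sub>F t in sequentially. (x t i - mean N E \<sigma> (x t))^2 \<le> Vf N E \<sigma> (x t) / gam E \<sigma> i"
      using le by (intro always_eventually allI)
    show "(\<lambda>t. Vf N E \<sigma> (x t) / gam E \<sigma> i) \<longlonglongrightarrow> 0"
      by (rule tendsto_divide_zero[OF V])
  qed simp
  then have "(\<lambda>t. sqrt ((x t i - mean N E \<sigma> (x t))^2)) \<longlonglongrightarrow> sqrt 0"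
    by (intro tendsto_intros)
  then show ?thesis by (simp add: tendsto_rabs_zero_iff)
qed

theorem consensus:
  assumes conn: "\<forall>i<N. \<forall>j<N. (i, j) \<in> E\<^sup>*"
    and summ: "\<forall>j<N. summable (\<lambda>t. \<bar>e j t\<bar>)" and i: "i < N"
  shows "(\<lambda>t. theta_state N E \<sigma> th0 e t i) \<longlonglongrightarrow>
          ((\<Sum>i<N. gam E \<sigma> i * th0 i) + (\<Sum>t. \<Sum>j<N. wt E j * e j t)) / Gam N E \<sigma>"
proof -
  define \<theta> where "\<theta> t = theta_state N E \<sigma> th0 e t" for t
  define u where "u t i = \<sigma> i * (\<Sum>j\<in>insert i (nbr E i). e j t) / wt E i" for t i
  have step: "\<theta> (Suc t) = (\<lambda>i. Tm E \<sigma> (\<theta> t) i + u t i)" for t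
    unfolding \<theta>_def u_def by (rule ext) (rule theta_step)
  have "(\<lambda>t. \<Sum>i<N. gam E \<sigma> i * \<theta> t i)
      \<longlonglongrightarrow> (\<Sum>i<N. gam E \<sigma> i * th0 i) + (\<Sum>t. \<Sum>j<N. wt E j * e j t)"
    unfolding \<theta>_def theta_wsum
    by (intro tendsto_add tendsto_const summable_LIMSEQ weighted_noise_summable summ)
  then have mean_lim: "(\<lambda>t. mean N E \<sigma> (\<theta> t))
      \<longlonglongrightarrow> ((\<Sum>i<N. gam E \<sigma> i * th0 i) + (\<Sum>t. \<Sum>j<N. wt E j * e j t)) / Gam N E \<sigma>"
    unfolding mean_def by (intro tendsto_divide tendsto_const) (use Gam_pos in auto)
  obtain r C where r: "0 \<le> r" "r < 1" and rec: "\<And>x u. Vf N E \<sigma> (\<lambda>i. Tm E \<sigma> x i + u i)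
      \<le> r * Vf N E \<sigma> x + C * (\<Sum>i<N. gam E \<sigma> i * (u i)^2)"
    using noisy_contraction[OF conn] by blast
  have e0: "(\<lambda>t. e j t) \<longlonglongrightarrow> 0" if "j < N" for j
    using summable_LIMSEQ_zero[OF summ[rule_format, OF that]] by (simp add: tendsto_rabs_zero_iff)
  have "(\<lambda>t. u t k) \<longlonglongrightarrow> \<sigma> k * (\<Sum>j\<in>insert k (nbr E k). 0) / wt E k" if k: "k < N" for k
    unfolding u_def using k ug_nbr(1)[OF ug, of k] wt_pos[of E k]
    by (intro tendsto_intros e0) auto
  then have "(\<lambda>t. C * (\<Sum>i<N. gam E \<sigma> i * (u t i)^2)) \<longlonglongrightarrow> C * (\<Sum>i<N. gam E \<sigma> i * 0^2)"
    by (intro tendsto_intros) simp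
  then have "(\<lambda>t. Vf N E \<sigma> (\<theta> t)) \<longlonglongrightarrow> 0"
    by (intro linear_recursion_tendsto_zero[OF r Vf_nonneg]) (auto simp: step rec)
  then have "(\<lambda>t. (\<theta> t i - mean N E \<sigma> (\<theta> t)) + mean N E \<sigma> (\<theta> t))
      \<longlonglongrightarrow> 0 + ((\<Sum>i<N. gam E \<sigma> i * th0 i) + (\<Sum>t. \<Sum>j<N. wt E j * e j t)) / Gam N E \<sigma>"
    by (intro tendsto_add deviation_tendsto_zero[OF _ i] mean_lim)
  then show ?thesis unfolding \<theta>_def by simp
qed

end

text \<open>Moments of the centred Laplace law with scale s: density exp(-|x|/s)/(2s), second
  moment 2 s^2.  The density is the even extension of the exponential (Erlang order 0)
  density with rate 1/s, whose second moment is 2 s^2.\<close>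

lemma laplace_second_moment_lborel:
  fixes s :: real
  assumes s: "0 < s"
  shows "(\<integral>\<^sup>+ x. ennreal (exp (- \<bar>x\<bar> / s) / (2 * s)) * ennreal (x^2) \<partial>lborel) = ennreal (2 * s^2)"
proof -
  define g where "g x = erlang_density 0 (1 / s) x" for x
  have g0: "0 \<le> g x" for x unfolding g_def erlang_density_def using s by simp
  have gm: "(\<lambda>x. ennreal (g x * x^2 / 2)) \<in> borel_measurable lborel"
    unfolding g_def erlang_density_def by measurable
  have even: "exp (- \<bar>x\<bar> / s) / (2 * s) * x^2 = g x * x^2 / 2 + g (-x) * (-x)^2 / 2" for x
    by (cases x "0::real" rule: linorder_cases) (simp_all add: g_def erlang_density_def)
  have mom: "(\<integral>\<^sup>+ x. ennreal (g x * x^2) \<partial>lborel) = ennreal (2 * s^2)"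
    using nn_integral_erlang_ith_moment[of "1/s" 0 2] s unfolding g_def
    by (simp add: power_divide)
  have half: "(\<integral>\<^sup>+ x. ennreal (g x * x^2 / 2) \<partial>lborel) = ennreal (s^2)"
  proof -
    have e: "ennreal (g x * x^2 / 2) = ennreal (1/2) * ennreal (g x * x^2)" for x
      using ennreal_mult'[of "1/2" "g x * x^2"] by simp
    have "(\<integral>\<^sup>+ x. ennreal (g x * x^2 / 2) \<partial>lborel) = (\<integral>\<^sup>+ x. ennreal (1/2) * ennreal (g x * x^2) \<partial>lborel)"
      unfolding e ..
    also have "\<dots> = ennreal (1/2) * ennreal (2 * s^2)"
      by (subst nn_integral_cmult) (use mom in \<open>auto simp: g_def erlang_density_def\<close>)
    also have "\<dots> = ennreal (1/2 * (2 * s^2))" by (rule ennreal_mult'[symmetric]) simp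
    finally show ?thesis by simp
  qed
  have refl: "(\<integral>\<^sup>+ x. ennreal (g (-x) * (-x)^2 / 2) \<partial>lborel) = ennreal (s^2)"
    using nn_integral_real_affine[of "\<lambda>x. ennreal (g x * x^2 / 2)" "-1" 0] gm half by simp
  have "(\<integral>\<^sup>+ x. ennreal (exp (- \<bar>x\<bar> / s) / (2 * s)) * ennreal (x^2) \<partial>lborel)
      = (\<integral>\<^sup>+ x. ennreal (g x * x^2 / 2) + ennreal (g (-x) * (-x)^2 / 2) \<partial>lborel)"
  proof (intro nn_integral_cong)
    fix x :: real
    have "ennreal (exp (- \<bar>x\<bar> / s) / (2 * s)) * ennreal (x^2)
        = ennreal (exp (- \<bar>x\<bar> / s) / (2 * s) * x^2)"
      by (rule ennreal_mult'[symmetric]) (use s in simp)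
    also have "\<dots> = ennreal (g x * x^2 / 2 + g (-x) * (-x)^2 / 2)" by (simp only: even)
    also have "\<dots> = ennreal (g x * x^2 / 2) + ennreal (g (-x) * (-x)^2 / 2)"
      by (rule ennreal_plus) (simp_all add: g0)
    finally show "ennreal (exp (- \<bar>x\<bar> / s) / (2 * s)) * ennreal (x^2)
        = ennreal (g x * x^2 / 2) + ennreal (g (-x) * (-x)^2 / 2)" .
  qed
  also have "\<dots> = ennreal (s^2) + ennreal (s^2)"
  proof -
    have gm': "(\<lambda>x. ennreal (g (-x) * (-x)^2 / 2)) \<in> borel_measurable lborel"
      unfolding g_def erlang_density_def by measurable
    show ?thesis unfolding nn_integral_add[OF gm gm'] half refl ..
  qed
  finally show ?thesis by (simp add: ennreal_plus[symmetric])
qed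

lemma abs_le_sq_s: "0 < s \<Longrightarrow> \<bar>x::real\<bar> \<le> x^2 / (2 * s) + s / 2"
proof -
  assume s: "0 < s"
  have "0 \<le> (\<bar>x\<bar> - s)^2" by simp
  then have "2 * s * \<bar>x\<bar> \<le> x^2 + s^2" by (simp add: power2_eq_square algebra_simps)
  then show ?thesis using s by (simp add: field_simps power2_eq_square)
qed

lemma laplace_moments:
  fixes M :: "'a measure" and X :: "'a \<Rightarrow> real" and s :: real
  assumes P: "prob_space M" and s: "0 < s"
    and D: "distributed M lborel X (\<lambda>x. ennreal (exp (- \<bar>x\<bar> / s) / (2 * s)))"
  shows "integrable M (\<lambda>\<omega>. (X \<omega>)^2)" "(\<integral>\<omega>. (X \<omega>)^2 \<partial>M) = 2 * s^2"
    "integrable M X" "(\<integral>\<omega>. X \<omega> \<partial>M) = 0" "(\<integral>\<omega>. \<bar>X \<omega>\<bar> \<partial>M) \<le> 3 * s / 2"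
proof -
  interpret prob_space M by (rule P)
  define f where "f x = exp (- \<bar>x\<bar> / s) / (2 * s)" for x
  have f0: "0 \<le> f x" for x unfolding f_def using s by simp
  have Df: "distributed M lborel X (\<lambda>x. ennreal (f x))" using D unfolding f_def .
  have Xm: "X \<in> borel_measurable M" using Df unfolding distributed_def by simp
  have "(\<integral>\<^sup>+ \<omega>. ennreal ((X \<omega>)^2) \<partial>M) = ennreal (2 * s^2)"
    using distributed_nn_integral[OF Df, of "\<lambda>x. ennreal (x^2)"]
      laplace_second_moment_lborel[OF s] unfolding f_def by simp
  then have sq: "integrable M (\<lambda>\<omega>. (X \<omega>)^2) \<and> (\<integral>\<omega>. (X \<omega>)^2 \<partial>M) = 2 * s^2"
    by (rule nn_integral_eq_integrable[THEN iffD1, rotated 3]) (use Xm in auto)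
  then show sqi: "integrable M (\<lambda>\<omega>. (X \<omega>)^2)" and "(\<integral>\<omega>. (X \<omega>)^2 \<partial>M) = 2 * s^2" by auto
  have bound_nonneg: "0 \<le> x^2 / (2 * s) + s / 2" for x :: real
    using s by (intro add_nonneg_nonneg divide_nonneg_nonneg) auto
  show Xi: "integrable M X"
    by (rule Bochner_Integration.integrable_bound[where f = "\<lambda>\<omega>. (X \<omega>)^2 / (2 * s) + s / 2"])
       (use sqi Xm abs_le_sq_s[OF s] in \<open>auto simp: abs_of_nonneg[OF bound_nonneg]\<close>)
  have "(\<integral>x. f x * x \<partial>lborel) = \<bar>-1\<bar> *\<^sub>R (\<integral>x. f (0 + -1 * x) * (0 + -1 * x) \<partial>lborel)"
    by (rule lborel_integral_real_affine) simp
  also have "\<dots> = - (\<integral>x. f x * x \<partial>lborel)" unfolding f_def by simp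
  finally have odd: "(\<integral>x. f x * x \<partial>lborel) = 0" by simp
  show "(\<integral>\<omega>. X \<omega> \<partial>M) = 0"
    using distributed_integral[OF Df, of "\<lambda>x. x"] odd f0 by simp
  have "(\<integral>\<omega>. \<bar>X \<omega>\<bar> \<partial>M) \<le> (\<integral>\<omega>. (X \<omega>)^2 / (2 * s) + s / 2 \<partial>M)"
    by (rule integral_mono) (use Xi sqi abs_le_sq_s[OF s] in auto)
  also have "\<dots> = 3 * s / 2" using sq s by (simp add: prob_space power2_eq_square field_simps)
  finally show "(\<integral>\<omega>. \<bar>X \<omega>\<bar> \<partial>M) \<le> 3 * s / 2" .
qed

text \<open>Second moment of a finite weighted sum of independent centred square-integrable random
  variables: the cross terms vanish.\<close>

lemma indep_centred_cross_moment:
  fixes M :: "'a measure" and Z :: "'i \<Rightarrow> 'a \<Rightarrow> real"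
  assumes P: "prob_space M" and ind: "prob_space.indep_vars M (\<lambda>_. borel) Z I"
    and pq: "p \<in> I" "p' \<in> I" "p \<noteq> p'"
    and zi: "integrable M (Z p)" "integrable M (Z p')" and z0: "(\<integral>\<omega>. Z p \<omega> \<partial>M) = 0"
  shows "integrable M (\<lambda>\<omega>. Z p \<omega> * Z p' \<omega>)" "(\<integral>\<omega>. Z p \<omega> * Z p' \<omega> \<partial>M) = 0"
proof -
  interpret prob_space M by (rule P)
  have ind2: "indep_vars (\<lambda>_. borel) Z {p, p'}"
    by (rule indep_vars_subset[OF ind]) (use pq in auto)
  have ints: "\<And>i. i \<in> {p, p'} \<Longrightarrow> integrable M (Z i)" using zi by auto
  have prod: "(\<Prod>i\<in>{p, p'}. Z i \<omega>) = Z p \<omega> * Z p' \<omega>" for \<omega> using pq by simp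
  show "integrable M (\<lambda>\<omega>. Z p \<omega> * Z p' \<omega>)"
    using indep_vars_integrable[OF _ ind2 ints] unfolding prod by simp
  have "(\<integral>\<omega>. (\<Prod>i\<in>{p, p'}. Z i \<omega>) \<partial>M) = (\<Prod>i\<in>{p, p'}. \<integral>\<omega>. Z i \<omega> \<partial>M)"
    by (rule indep_vars_lebesgue_integral[OF _ ind2 ints]) simp_all
  then show "(\<integral>\<omega>. Z p \<omega> * Z p' \<omega> \<partial>M) = 0" using pq z0 unfolding prod by simp
qed

lemma sum_sq_expect:
  fixes M :: "'a measure" and Z :: "'i \<Rightarrow> 'a \<Rightarrow> real" and a :: "'i \<Rightarrow> real"
  assumes P: "prob_space M" and ind: "prob_space.indep_vars M (\<lambda>_. borel) Z I"
    and J: "finite J" "J \<subseteq> I"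
    and sqi: "\<And>p. p \<in> J \<Longrightarrow> integrable M (\<lambda>\<omega>. (Z p \<omega>)^2)"
    and zi: "\<And>p. p \<in> J \<Longrightarrow> integrable M (Z p)"
    and z0: "\<And>p. p \<in> J \<Longrightarrow> (\<integral>\<omega>. Z p \<omega> \<partial>M) = 0"
  shows "integrable M (\<lambda>\<omega>. (\<Sum>p\<in>J. a p * Z p \<omega>)^2)"
    "(\<integral>\<omega>. (\<Sum>p\<in>J. a p * Z p \<omega>)^2 \<partial>M) = (\<Sum>p\<in>J. (a p)^2 * (\<integral>\<omega>. (Z p \<omega>)^2 \<partial>M))"
proof -
  have expand: "(\<Sum>p\<in>J. a p * Z p \<omega>)^2 = (\<Sum>p\<in>J. \<Sum>p'\<in>J. (a p * a p') * (Z p \<omega> * Z p' \<omega>))" for \<omega>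
    unfolding power2_eq_square sum_product by (intro sum.cong refl) (simp add: algebra_simps)
  have cross: "integrable M (\<lambda>\<omega>. Z p \<omega> * Z p' \<omega>) \<and>
      (\<integral>\<omega>. Z p \<omega> * Z p' \<omega> \<partial>M) = (if p = p' then (\<integral>\<omega>. (Z p \<omega>)^2 \<partial>M) else 0)"
    if p: "p \<in> J" and p': "p' \<in> J" for p p'
    using sqi[OF p] indep_centred_cross_moment[OF P ind _ _ _ zi[OF p] zi[OF p'] z0[OF p]] p p' J
    by (cases "p = p'") (auto simp: power2_eq_square)
  have inner: "integrable M (\<lambda>\<omega>. \<Sum>p'\<in>J. (a p * a p') * (Z p \<omega> * Z p' \<omega>))" if p: "p \<in> J" for p
    using cross[OF p] by (intro Bochner_Integration.integrable_sum integrable_mult_right) auto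
  show "integrable M (\<lambda>\<omega>. (\<Sum>p\<in>J. a p * Z p \<omega>)^2)"
    unfolding expand by (rule Bochner_Integration.integrable_sum) (rule inner)
  have "(\<integral>\<omega>. (\<Sum>p\<in>J. a p * Z p \<omega>)^2 \<partial>M)
      = (\<Sum>p\<in>J. \<Sum>p'\<in>J. (a p * a p') * (\<integral>\<omega>. Z p \<omega> * Z p' \<omega> \<partial>M))"
  proof -
    have "(\<integral>\<omega>. (\<Sum>p\<in>J. a p * Z p \<omega>)^2 \<partial>M)
        = (\<Sum>p\<in>J. \<integral>\<omega>. (\<Sum>p'\<in>J. (a p * a p') * (Z p \<omega> * Z p' \<omega>)) \<partial>M)"
      unfolding expand by (rule Bochner_Integration.integral_sum) (rule inner)
    also have "\<dots> = (\<Sum>p\<in>J. \<Sum>p'\<in>J. (a p * a p') * (\<integral>\<omega>. Z p \<omega> * Z p' \<omega> \<partial>M))"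
    proof (intro sum.cong refl)
      fix p assume p: "p \<in> J"
      show "(\<integral>\<omega>. (\<Sum>p'\<in>J. (a p * a p') * (Z p \<omega> * Z p' \<omega>)) \<partial>M)
          = (\<Sum>p'\<in>J. (a p * a p') * (\<integral>\<omega>. Z p \<omega> * Z p' \<omega> \<partial>M))"
        using cross[OF p] by (subst Bochner_Integration.integral_sum) (auto intro: integrable_mult_right)
    qed
    finally show ?thesis .
  qed
  also have "\<dots> = (\<Sum>p\<in>J. \<Sum>p'\<in>J. if p = p' then (a p)^2 * (\<integral>\<omega>. (Z p \<omega>)^2 \<partial>M) else 0)"
  proof (intro sum.cong refl)
    fix p p' assume p: "p \<in> J" and p': "p' \<in> J"
    have "(\<integral>\<omega>. Z p \<omega> * Z p' \<omega> \<partial>M) = (if p = p' then (\<integral>\<omega>. (Z p \<omega>)^2 \<partial>M) else 0)"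
      using cross[OF p p'] by blast
    then show "(a p * a p') * (\<integral>\<omega>. Z p \<omega> * Z p' \<omega> \<partial>M)
        = (if p = p' then (a p)^2 * (\<integral>\<omega>. (Z p \<omega>)^2 \<partial>M) else 0)"
      by (simp add: power2_eq_square)
  qed
  also have "\<dots> = (\<Sum>p\<in>J. (a p)^2 * (\<integral>\<omega>. (Z p \<omega>)^2 \<partial>M))"
    using J(1) by (simp add: sum.delta)
  finally show "(\<integral>\<omega>. (\<Sum>p\<in>J. a p * Z p \<omega>)^2 \<partial>M) = (\<Sum>p\<in>J. (a p)^2 * (\<integral>\<omega>. (Z p \<omega>)^2 \<partial>M))" .
qed

lemma noise_partial_sum_second_moment:
  fixes M :: "'a measure" and \<eta> :: "nat \<Rightarrow> nat \<Rightarrow> 'a \<Rightarrow> real" and w v :: "nat \<Rightarrow> real"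
  assumes P: "prob_space M"
    and ind: "prob_space.indep_vars M (\<lambda>_. borel) (\<lambda>p. \<eta> (fst p) (snd p)) ({0..<N} \<times> UNIV)"
    and mom: "\<And>j t. j < N \<Longrightarrow> integrable M (\<eta> j t) \<and> (\<integral>\<omega>. \<eta> j t \<omega> \<partial>M) = 0 \<and>
                 integrable M (\<lambda>\<omega>. (\<eta> j t \<omega>)^2) \<and> (\<integral>\<omega>. (\<eta> j t \<omega>)^2 \<partial>M) \<le> v t"
    and v: "\<And>t. 0 \<le> v t" "summable v"
  shows "integrable M (\<lambda>\<omega>. (\<Sum>t<n. \<Sum>j<N. w j * \<eta> j t \<omega>)^2)"
    "(\<integral>\<omega>. (\<Sum>t<n. \<Sum>j<N. w j * \<eta> j t \<omega>)^2 \<partial>M) \<le> (\<Sum>j<N. (w j)^2) * (\<Sum>t. v t)"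
proof -
  define Z where "Z p = \<eta> (fst p) (snd p)" for p
  define J where "J = {..<N} \<times> {..<n}"
  have J: "finite J" "J \<subseteq> {0..<N} \<times> UNIV" unfolding J_def by auto
  have pair: "(\<Sum>t<n. \<Sum>j<N. w j * \<eta> j t \<omega>) = (\<Sum>p\<in>J. w (fst p) * Z p \<omega>)" for \<omega>
    unfolding J_def Z_def by (subst sum.swap) (simp add: sum.cartesian_product split_beta)
  have momJ: "integrable M (Z p) \<and> (\<integral>\<omega>. Z p \<omega> \<partial>M) = 0 \<and>
      integrable M (\<lambda>\<omega>. (Z p \<omega>)^2) \<and> (\<integral>\<omega>. (Z p \<omega>)^2 \<partial>M) \<le> v (snd p)" if "p \<in> J" for p
    using mom[of "fst p" "snd p"] that unfolding J_def Z_def by auto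
  note SS = sum_sq_expect[OF P ind[folded Z_def] J, of "\<lambda>p. w (fst p)"]
  show "integrable M (\<lambda>\<omega>. (\<Sum>t<n. \<Sum>j<N. w j * \<eta> j t \<omega>)^2)"
    unfolding pair using SS(1) momJ by blast
  have "(\<integral>\<omega>. (\<Sum>t<n. \<Sum>j<N. w j * \<eta> j t \<omega>)^2 \<partial>M)
      = (\<Sum>p\<in>J. (w (fst p))^2 * (\<integral>\<omega>. (Z p \<omega>)^2 \<partial>M))"
    unfolding pair using SS(2) momJ by blast
  also have "\<dots> \<le> (\<Sum>p\<in>J. (w (fst p))^2 * v (snd p))"
    using momJ by (intro sum_mono mult_left_mono) auto
  also have "\<dots> = (\<Sum>j<N. (w j)^2) * (\<Sum>t<n. v t)"
    unfolding J_def sum_product sum.cartesian_product by (simp add: split_beta)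
  also have "\<dots> \<le> (\<Sum>j<N. (w j)^2) * (\<Sum>t. v t)"
    using v by (intro mult_left_mono sum_le_suminf sum_nonneg) auto
  finally show "(\<integral>\<omega>. (\<Sum>t<n. \<Sum>j<N. w j * \<eta> j t \<omega>)^2 \<partial>M) \<le> (\<Sum>j<N. (w j)^2) * (\<Sum>t. v t)" .
qed

text \<open>A sequence of random variables whose first absolute moments are summable is almost
  surely absolutely summable (monotone convergence).\<close>

lemma AE_abs_summable:
  fixes X :: "nat \<Rightarrow> 'a \<Rightarrow> real"
  assumes int: "\<And>t. integrable M (X t)" and summ: "summable (\<lambda>t. \<integral>\<omega>. \<bar>X t \<omega>\<bar> \<partial>M)"
  shows "AE \<omega> in M. summable (\<lambda>t. \<bar>X t \<omega>\<bar>)"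
proof -
  have Xm[measurable]: "X t \<in> borel_measurable M" for t using int by auto
  define Y where "Y \<omega> = (\<Sum>t. ennreal \<bar>X t \<omega>\<bar>)" for \<omega>
  have Ym: "Y \<in> borel_measurable M" unfolding Y_def by measurable
  have "(\<integral>\<^sup>+\<omega>. Y \<omega> \<partial>M) = (\<Sum>t. \<integral>\<^sup>+\<omega>. ennreal \<bar>X t \<omega>\<bar> \<partial>M)"
    unfolding Y_def by (rule nn_integral_suminf) measurable
  also have "\<dots> = (\<Sum>t. ennreal (\<integral>\<omega>. \<bar>X t \<omega>\<bar> \<partial>M))"
    using int by (intro suminf_cong nn_integral_eq_integral) auto
  also have "\<dots> = ennreal (\<Sum>t. \<integral>\<omega>. \<bar>X t \<omega>\<bar> \<partial>M)"
    using summ by (intro suminf_ennreal2) auto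
  finally have "(\<integral>\<^sup>+\<omega>. Y \<omega> \<partial>M) \<noteq> \<infinity>" by simp
  with Ym have "AE \<omega> in M. Y \<omega> \<noteq> \<infinity>" by (rule nn_integral_noteq_infinite)
  then show ?thesis
    by eventually_elim (use summable_suminf_not_top in \<open>auto simp: Y_def top_unique\<close>)
qed

text \<open>Fatou plus Markov: if E[f_n^2] <= V for all n, then outside an event of probability at
  most b every limit x of f_n(omega) satisfies x^2 < V / b.\<close>

lemma limit_second_moment_tail:
  fixes f :: "nat \<Rightarrow> 'a \<Rightarrow> real"
  assumes P: "prob_space M" and V: "0 < V" and b: "0 < b"
    and sqi: "\<And>n. integrable M (\<lambda>\<omega>. (f n \<omega>)^2)" and mom: "\<And>n. (\<integral>\<omega>. (f n \<omega>)^2 \<partial>M) \<le> V"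
  shows "\<exists>A\<in>sets M. 1 - b \<le> measure M A \<and> (\<forall>\<omega>\<in>A. \<forall>x. (\<lambda>n. f n \<omega>) \<longlonglongrightarrow> x \<longrightarrow> x^2 < V / b)"
proof -
  interpret prob_space M by (rule P)
  have fm[measurable]: "(\<lambda>\<omega>. (f n \<omega>)^2) \<in> borel_measurable M" for n using sqi by auto
  define W where "W \<omega> = liminf (\<lambda>n. ennreal ((f n \<omega>)^2))" for \<omega>
  have Wm: "W \<in> borel_measurable M" unfolding W_def by measurable
  have "(\<integral>\<^sup>+\<omega>. W \<omega> \<partial>M) \<le> liminf (\<lambda>n. \<integral>\<^sup>+\<omega>. ennreal ((f n \<omega>)^2) \<partial>M)"
    unfolding W_def by (rule nn_integral_liminf) measurable
  also have "\<dots> \<le> limsup (\<lambda>n. \<integral>\<^sup>+\<omega>. ennreal ((f n \<omega>)^2) \<partial>M)"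
    by (rule Liminf_le_Limsup) simp
  also have "\<dots> \<le> ennreal V"
  proof (rule Limsup_bounded, rule always_eventually, rule allI)
    fix n
    show "(\<integral>\<^sup>+\<omega>. ennreal ((f n \<omega>)^2) \<partial>M) \<le> ennreal V"
      using nn_integral_eq_integral[OF sqi[of n]] mom[of n] by (simp add: ennreal_leI)
  qed
  finally have intW: "(\<integral>\<^sup>+\<omega>. W \<omega> \<partial>M) \<le> ennreal V" .
  define \<kappa> where "\<kappa> = ennreal (b / V)"
  define B where "B = {\<omega>\<in>space M. 1 \<le> \<kappa> * W \<omega>}"
  have Bs: "B \<in> sets M" unfolding B_def using Wm by measurable
  have "emeasure M B \<le> \<kappa> * (\<integral>\<^sup>+\<omega>. W \<omega> * indicator (space M) \<omega> \<partial>M)"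
    unfolding B_def by (rule nn_integral_Markov_inequality) (use Wm in auto)
  also have "(\<integral>\<^sup>+\<omega>. W \<omega> * indicator (space M) \<omega> \<partial>M) = (\<integral>\<^sup>+\<omega>. W \<omega> \<partial>M)"
    by (intro nn_integral_cong) simp
  also have "\<kappa> * (\<integral>\<^sup>+\<omega>. W \<omega> \<partial>M) \<le> \<kappa> * ennreal V" using intW by (rule mult_left_mono) simp
  also have "\<dots> = ennreal b" unfolding \<kappa>_def using V b by (simp add: ennreal_mult'[symmetric])
  finally have "measure M B \<le> b" using b by (simp add: emeasure_eq_measure)
  then have prob: "1 - b \<le> measure M (space M - B)" using prob_compl[OF Bs] by simp
  show ?thesis
  proof (intro bexI[of _ "space M - B"] conjI prob ballI allI impI)
    fix \<omega> x assume \<omega>: "\<omega> \<in> space M - B" and lim: "(\<lambda>n. f n \<omega>) \<longlonglongrightarrow> x"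
    have "(\<lambda>n. ennreal ((f n \<omega>)^2)) \<longlonglongrightarrow> ennreal (x^2)"
      by (intro tendsto_ennrealI tendsto_power lim)
    then have "W \<omega> = ennreal (x^2)" unfolding W_def by (intro lim_imp_Liminf) simp_all
    then have "\<not> 1 \<le> ennreal (b / V * x^2)"
      using \<omega> V b unfolding B_def \<kappa>_def by (simp add: ennreal_mult'[symmetric])
    then show "x^2 < V / b" using b V by (simp add: field_simps)
  qed (use Bs in auto)
qed

lemma event_AE_refine:
  assumes A: "A \<in> sets M" and P: "AE \<omega> in M. P \<omega>"
  shows "\<exists>A'\<in>sets M. measure M A' = measure M A \<and> (\<forall>\<omega>\<in>A'. \<omega> \<in> A \<and> P \<omega>)"
proof -
  obtain Z where Z: "\<And>\<omega>. \<omega> \<in> space M - Z \<Longrightarrow> P \<omega>" "Z \<in> null_sets M"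
    using AE_E3[OF P] by blast
  show ?thesis
    using A Z sets.sets_into_space[OF A] measure_Diff_null_set[OF A Z(2)]
    by (intro bexI[of _ "A - Z"]) auto
qed

text \<open>Laplace noise with geometrically decaying scales c q^t is almost surely absolutely
  summable, since its first absolute moments are bounded by 3 c q^t / 2.\<close>

lemma laplace_AE_abs_summable:
  fixes M :: "'a measure" and X :: "nat \<Rightarrow> 'a \<Rightarrow> real"
  assumes P: "prob_space M" and c: "0 < c" and q: "0 < q" "q < 1"
    and distr: "\<And>t. distributed M lborel (X t)
                  (\<lambda>x. ennreal (exp (- \<bar>x\<bar> / (c * q ^ t)) / (2 * c * q ^ t)))"
  shows "AE \<omega> in M. summable (\<lambda>t. \<bar>X t \<omega>\<bar>)"
proof -
  have s0: "0 < c * q ^ t" for t using c q by simp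
  have "distributed M lborel (X t) (\<lambda>x. ennreal (exp (- \<bar>x\<bar> / (c * q ^ t)) / (2 * (c * q ^ t))))"
    for t using distr[of t] by (simp add: mult.assoc)
  note LM = laplace_moments[OF P s0 this]
  have "summable (\<lambda>t. 3 / 2 * (c * q ^ t))"
    using q by (intro summable_mult summable_geometric) auto
  moreover have "norm (\<integral>\<omega>. \<bar>X t \<omega>\<bar> \<partial>M) \<le> 3 / 2 * (c * q ^ t)" for t
    using LM(5)[of t] by simp
  ultimately have "summable (\<lambda>t. \<integral>\<omega>. \<bar>X t \<omega>\<bar> \<partial>M)"
    by (rule summable_comparison_test')
  then show ?thesis by (rule AE_abs_summable[rotated]) (rule LM(3))
qed

text \<open>The good event: with probability at least 1 - b, independent centred Laplace noises with
  scales c q^t are absolutely summable and their w-weighted total X satisfies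
  X^2 < (sum_j w_j^2) (2 c^2 / (1 - q^2)) / b; the numerator is the uniform bound on the
  second moments of the partial sums of the weighted noise.\<close>

lemma laplace_noise_good_event:
  fixes M :: "'a measure" and \<eta> :: "nat \<Rightarrow> nat \<Rightarrow> 'a \<Rightarrow> real" and w :: "nat \<Rightarrow> real"
  assumes P: "prob_space M" and c: "0 < c" and q: "0 < q" "q < 1" and b: "0 < b" and N: "0 < N"
    and w: "\<And>j. j < N \<Longrightarrow> w j \<noteq> 0"
    and ind: "prob_space.indep_vars M (\<lambda>_. borel) (\<lambda>p. \<eta> (fst p) (snd p)) ({0..<N} \<times> UNIV)"
    and distr: "\<forall>i<N. \<forall>t. distributed M lborel (\<eta> i t)
                  (\<lambda>x. ennreal (exp (- \<bar>x\<bar> / (c * q ^ t)) / (2 * c * q ^ t)))"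
  shows "\<exists>A\<in>sets M. 1 - b \<le> measure M A \<and> (\<forall>\<omega>\<in>A. (\<forall>j<N. summable (\<lambda>t. \<bar>\<eta> j t \<omega>\<bar>)) \<and>
           (\<Sum>t. \<Sum>j<N. w j * \<eta> j t \<omega>)^2 < (\<Sum>j<N. (w j)^2) * (2 * c^2 / (1 - q^2)) / b)"
proof -
  define s where "s t = c * q ^ t" for t
  have s0: "0 < s t" for t unfolding s_def using c q by simp
  have "distributed M lborel (\<eta> j t) (\<lambda>x. ennreal (exp (- \<bar>x\<bar> / s t) / (2 * s t)))"
    if "j < N" for j t using distr that unfolding s_def by (simp add: mult.assoc)
  note LM = laplace_moments[OF P s0 this]
  have q2: "0 \<le> q^2" "q^2 < 1" using q by (auto simp: power_less_one_iff)
  have var: "(\<lambda>t. 2 * (s t)^2) sums (2 * c^2 / (1 - q^2))"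
    using sums_mult[OF geometric_sums[of "q^2"], of "2 * c^2"] q2
    unfolding s_def by (simp add: power_mult_distrib power_mult[symmetric] mult_ac)
  have summ: "AE \<omega> in M. \<forall>j\<in>{..<N}. summable (\<lambda>t. \<bar>\<eta> j t \<omega>\<bar>)"
    using distr by (intro AE_finite_allI laplace_AE_abs_summable[OF P c q]) auto
  define V where "V = (\<Sum>j<N. (w j)^2) * (2 * c^2 / (1 - q^2))"
  have "0 < (\<Sum>j<N. (w j)^2)" using N w by (intro sum_pos) auto
  then have V0: "0 < V" unfolding V_def using c q2 by simp
  have mom_t: "integrable M (\<eta> j t) \<and> (\<integral>\<omega>. \<eta> j t \<omega> \<partial>M) = 0 \<and>
      integrable M (\<lambda>\<omega>. (\<eta> j t \<omega>)^2) \<and> (\<integral>\<omega>. (\<eta> j t \<omega>)^2 \<partial>M) \<le> 2 * (s t)^2"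
    if "j < N" for j t using LM[OF that] by simp
  note mom = noise_partial_sum_second_moment[OF P ind mom_t _ sums_summable[OF var], of w]
  have V_eq: "(\<Sum>j<N. (w j)^2) * (\<Sum>t. 2 * (s t)^2) = V"
    unfolding V_def sums_unique[OF var, symmetric] ..
  have "\<exists>A\<in>sets M. 1 - b \<le> measure M A \<and>
      (\<forall>\<omega>\<in>A. \<forall>x. (\<lambda>n. \<Sum>t<n. \<Sum>j<N. w j * \<eta> j t \<omega>) \<longlonglongrightarrow> x \<longrightarrow> x^2 < V / b)"
    by (rule limit_second_moment_tail[OF P V0 b]) (use mom V_eq in auto)
  then obtain A where A: "A \<in> sets M" "1 - b \<le> measure M A"
    and tail: "\<forall>\<omega>\<in>A. \<forall>x. (\<lambda>n. \<Sum>t<n. \<Sum>j<N. w j * \<eta> j t \<omega>) \<longlonglongrightarrow> x \<longrightarrow> x^2 < V / b"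
    by blast
  obtain A' where A': "A' \<in> sets M" "measure M A' = measure M A"
    and good: "\<forall>\<omega>\<in>A'. \<omega> \<in> A \<and> (\<forall>j\<in>{..<N}. summable (\<lambda>t. \<bar>\<eta> j t \<omega>\<bar>))"
    using event_AE_refine[OF A(1) summ] by blast
  show ?thesis
  proof (intro bexI[OF _ A'(1)] conjI ballI)
    show "1 - b \<le> measure M A'" using A A' by simp
    fix \<omega> assume \<omega>: "\<omega> \<in> A'"
    then have \<omega>A: "\<omega> \<in> A" and abs: "\<forall>j<N. summable (\<lambda>t. \<bar>\<eta> j t \<omega>\<bar>)" using good by auto
    then show "\<forall>j<N. summable (\<lambda>t. \<bar>\<eta> j t \<omega>\<bar>)" by blast
    show "(\<Sum>t. \<Sum>j<N. w j * \<eta> j t \<omega>)^2 < (\<Sum>j<N. (w j)^2) * (2 * c^2 / (1 - q^2)) / b"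
      using tail \<omega>A summable_LIMSEQ[OF weighted_noise_summable[OF abs]] unfolding V_def by blast
  qed
qed

lemma accuracy_bound:
  fixes X G W c q b :: real
  assumes G: "0 < G" and W: "0 \<le> W" and c: "0 \<le> c" and q: "q^2 < 1" and b: "0 < b"
    and X: "X^2 < W * (2 * c^2 / (1 - q^2)) / b"
  shows "\<bar>X / G\<bar> \<le> sqrt (2 * (W / G^2)) * c / sqrt (b * (1 - q^2))"
proof -
  define R where "R = sqrt (2 * (W / G^2)) * c / sqrt (b * (1 - q^2))"
  have bq: "0 < b * (1 - q^2)" using b q by simp
  have R0: "0 \<le> R" unfolding R_def using G W c bq by simp
  have "R^2 = 2 * (W / G^2) * c^2 / (b * (1 - q^2))"
    unfolding R_def using G W bq by (simp add: power_divide power_mult_distrib)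
  also have "\<dots> = W * (2 * c^2 / (1 - q^2)) / b / G^2" using G bq b by (simp add: field_simps)
  finally have R2: "R^2 = W * (2 * c^2 / (1 - q^2)) / b / G^2" .
  have "\<bar>X / G\<bar>^2 = X^2 / G^2" by (simp add: power_divide)
  also have "\<dots> \<le> R^2" unfolding R2 using X G by (intro divide_right_mono) auto
  finally show ?thesis unfolding R_def[symmetric] by (rule power2_le_imp_le[OF _ R0])
qed

theorem mainTheorem10:
  fixes N :: nat and E :: "(nat \<times> nat) set" and lams :: "real list"
    and \<sigma> :: "nat \<Rightarrow> real" and c q :: real
    and M :: "'a measure" and \<eta> :: "nat \<Rightarrow> nat \<Rightarrow> 'a \<Rightarrow> real"
    and th0 :: "nat \<Rightarrow> real" and b :: real
  assumes graph: "undirected_graph N E" and N2: "2 \<le> N"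
    and eig: "laplacian_eigenvalues N E lams"
    and sigma: "\<forall>i<N. 0 < \<sigma> i \<and> \<sigma> i < 1"
    and c: "c > 0" and q: "0 < q" "q < 1"
    and lam2: "lams ! 1 > 0"
    and cond: "lams ! (N - 1) * (Max ((\<lambda>i. \<sigma> i / (real (card (nbr E i)) + 1)) ` {0..<N}))^2
               < 2 * Min ((\<lambda>i. \<sigma> i / (real (card (nbr E i)) + 1)) ` {0..<N})"
    and P: "prob_space M"
    and noise_indep: "prob_space.indep_vars M (\<lambda>_. borel) (\<lambda>p. \<eta> (fst p) (snd p)) ({0..<N} \<times> UNIV)"
    and noise_distr: "\<forall>i<N. \<forall>t. distributed M lborel (\<eta> i t)
                        (\<lambda>x. ennreal (exp (- \<bar>x\<bar> / (c * q ^ t)) / (2 * c * q ^ t)))"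
    and b: "0 < b" "b < 1"
  shows "\<exists>A\<in>sets M. measure M A \<ge> 1 - b \<and>
           (\<forall>\<omega>\<in>A. \<exists>\<theta>s. (\<forall>i<N. (\<lambda>t. theta_state N E \<sigma> th0 (\<lambda>j t. \<eta> j t \<omega>) t i) \<longlonglongrightarrow> \<theta>s) \<and>
              \<bar>\<theta>s - (\<Sum>i<N. ((real (card (nbr E i)) + 1) / \<sigma> i) * th0 i)
                     / (\<Sum>i<N. (real (card (nbr E i)) + 1) / \<sigma> i)\<bar>
              \<le> sqrt (2 * ((\<Sum>i<N. (real (card (nbr E i)) + 1)^2)
                           / (\<Sum>i<N. (real (card (nbr E i)) + 1) / \<sigma> i)^2)) * c
                 / sqrt (b * (1 - q^2)))"
proof -
  interpret weighted_consensus N E \<sigma> using graph sigma N2 by unfold_locales auto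
  have conn: "\<forall>i<N. \<forall>j<N. (i, j) \<in> E\<^sup>*" using connected_from_eig[OF graph N2 eig lam2] by blast
  have wt_nonzero: "\<And>j. j < N \<Longrightarrow> wt E j \<noteq> 0" using wt_pos[of E] by (metis less_irrefl)
  obtain A where A: "A \<in> sets M" "1 - b \<le> measure M A" and good: "\<forall>\<omega>\<in>A.
      (\<forall>j<N. summable (\<lambda>t. \<bar>\<eta> j t \<omega>\<bar>)) \<and>
      (\<Sum>t. \<Sum>j<N. wt E j * \<eta> j t \<omega>)^2 < (\<Sum>j<N. (wt E j)^2) * (2 * c^2 / (1 - q^2)) / b"
    using laplace_noise_good_event[where w = "wt E", OF P c q b(1) Npos wt_nonzero noise_indep noise_distr] by auto
  have q2: "q^2 < 1" using q by (simp add: power_less_one_iff)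
  show ?thesis
  proof (intro bexI[OF _ A(1)] conjI A(2) ballI exI)
    fix \<omega> assume "\<omega> \<in> A"
    note \<omega> = bspec[OF good this]
    define X where "X = (\<Sum>t. \<Sum>j<N. wt E j * \<eta> j t \<omega>)"
    show "\<forall>i<N. (\<lambda>t. theta_state N E \<sigma> th0 (\<lambda>j t. \<eta> j t \<omega>) t i)
        \<longlonglongrightarrow> ((\<Sum>i<N. gam E \<sigma> i * th0 i) + X) / Gam N E \<sigma>"
      using consensus[OF conn conjunct1[OF \<omega>]] unfolding X_def by blast
    have "\<bar>X / Gam N E \<sigma>\<bar> \<le> sqrt (2 * ((\<Sum>j<N. (wt E j)^2) / (Gam N E \<sigma>)^2)) * c / sqrt (b * (1 - q^2))"
      using \<omega> Gam_pos c q2 b(1) unfolding X_def by (intro accuracy_bound) (auto intro: sum_nonneg)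
    then show "\<bar>((\<Sum>i<N. gam E \<sigma> i * th0 i) + X) / Gam N E \<sigma>
          - (\<Sum>i<N. ((real (card (nbr E i)) + 1) / \<sigma> i) * th0 i) / (\<Sum>i<N. (real (card (nbr E i)) + 1) / \<sigma> i)\<bar>
        \<le> sqrt (2 * ((\<Sum>i<N. (real (card (nbr E i)) + 1)^2)
                     / (\<Sum>i<N. (real (card (nbr E i)) + 1) / \<sigma> i)^2)) * c / sqrt (b * (1 - q^2))"
      unfolding Gam_def gam_def wt_def by (simp add: add_divide_distrib)
  qed
qed

end
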